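(* Let $T$ be a simple tree of maximum degree $\Delta$, let $k\ge\Delta$, and let $f$ be a covering projection from a graph $G$ to $T^{(k)}$. If $G$ contains a cycle of length 4 as a subgraph, then for at least one of the two pairs of opposite edges of this 4-cycle, both edges of the pair are mapped by $f$ onto semi-edges.
   Context: A graph is a triple $(V,\Lambda,\iota)$ where $V$ is a set of vertices, $\Lambda=E\cup L\cup S$ is a set of links partitioned into edges, loops and semi-edges, and $\iota$ assigns to each edge a 2-element subset of $V$ and to each loop or semi-edge a single vertex. A covering projection from $G$ to $H$ is a map $f:V_G\cup\Lambda_G\to V_H\cup\Lambda_H$ sending vertices to vertices and links to links such that: for every edge $e$ of $H$ with end-vertices $u,v$, $f^{-1}(e)$ is a perfect matching between $f^{-1}(u)$ and $f^{-1}(v)$; for every loop $l$ of $H$ at $u$, $f^{-1}(l)$ is a disjoint union of cycles spanning $f^{-1}(u)$; for every semi-edge $s$ of $H$ at $u$, $f^{-1}(s)$ is a disjoint union of edges and semi-edges spanning $f^{-1}(u)$. For a simple tree $T$ of maximum degree $\Delta$ and $k\ge\Delta$, $T^{(k)}$ denotes the $k$-regular graph obtained from $T$ by attaching $k-\deg_T(u)$ semi-edges to each vertex $u$. *)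

theory Defs
  imports Main
begin

text \<open>A graph is given by a vertex set,
three pairwise disjoint sets of links (edges, loops, semi-edges) and an incidence
map assigning to each link its set of end-vertices.\<close>

record ('v, 'l) graph =
  gV :: "'v set"
  gE :: "'l set"
  gL :: "'l set"
  gS :: "'l set"
  gi :: "'l \<Rightarrow> 'v set"

definition links :: "('v, 'l) graph \<Rightarrow> 'l set" where
  "links G = gE G \<union> gL G \<union> gS G"

definition wf_graph :: "('v, 'l) graph \<Rightarrow> bool" where
  "wf_graph G \<longleftrightarrow>
     finite (gV G) \<and> finite (links G) \<and>
     gE G \<inter> gL G = {} \<and> gE G \<inter> gS G = {} \<and> gL G \<inter> gS G = {} \<and>
     (\<forall>e\<in>gE G. \<exists>u v. u \<noteq> v \<and> u \<in> gV G \<and> v \<in> gV G \<and> gi G e = {u, v}) \<and>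
     (\<forall>l\<in>gL G \<union> gS G. \<exists>u\<in>gV G. gi G l = {u})"

definition fiber :: "('v, 'l) graph \<Rightarrow> ('v \<Rightarrow> 'w) \<Rightarrow> 'w \<Rightarrow> 'v set" where
  "fiber G fv u = {x \<in> gV G. fv x = u}"

definition lfiber :: "('v, 'l) graph \<Rightarrow> ('l \<Rightarrow> 'm) \<Rightarrow> 'm \<Rightarrow> 'l set" where
  "lfiber G fl a = {l \<in> links G. fl l = a}"

definition covering ::
  "('v, 'l) graph \<Rightarrow> ('w, 'm) graph \<Rightarrow> ('v \<Rightarrow> 'w) \<Rightarrow> ('l \<Rightarrow> 'm) \<Rightarrow> bool" where
  "covering G H fv fl \<longleftrightarrow>
     (\<forall>x\<in>gV G. fv x \<in> gV H) \<and> (\<forall>l\<in>links G. fl l \<in> links H) \<and>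
     \<comment> \<open>edges: preimage is a perfect matching between the two fibres\<close>
     (\<forall>e\<in>gE H. \<forall>u v. u \<noteq> v \<and> gi H e = {u, v} \<longrightarrow>
        (\<forall>l\<in>lfiber G fl e. l \<in> gE G \<and>
            (\<exists>a b. gi G l = {a, b} \<and> a \<in> fiber G fv u \<and> b \<in> fiber G fv v)) \<and>
        (\<forall>x\<in>fiber G fv u \<union> fiber G fv v. \<exists>!l. l \<in> lfiber G fl e \<and> x \<in> gi G l)) \<and>
     \<comment> \<open>loops: preimage is a disjoint union of cycles spanning the fibre
         (each fibre vertex has degree 2, a loop counting twice)\<close>
     (\<forall>lp\<in>gL H. \<forall>u. gi H lp = {u} \<longrightarrow>
        (\<forall>l\<in>lfiber G fl lp. (l \<in> gE G \<or> l \<in> gL G) \<and> gi G l \<subseteq> fiber G fv u) \<and>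
        (\<forall>x\<in>fiber G fv u.
            card {l \<in> lfiber G fl lp. l \<in> gE G \<and> x \<in> gi G l}
            + 2 * card {l \<in> lfiber G fl lp. l \<in> gL G \<and> x \<in> gi G l} = 2)) \<and>
     \<comment> \<open>semi-edges: preimage is a disjoint union of edges and semi-edges spanning the fibre\<close>
     (\<forall>s\<in>gS H. \<forall>u. gi H s = {u} \<longrightarrow>
        (\<forall>l\<in>lfiber G fl s. (l \<in> gE G \<or> l \<in> gS G) \<and> gi G l \<subseteq> fiber G fv u) \<and>
        (\<forall>x\<in>fiber G fv u. \<exists>!l. l \<in> lfiber G fl s \<and> x \<in> gi G l))"

definition simple_graph :: "'a set \<Rightarrow> 'a set set \<Rightarrow> bool" where
  "simple_graph VT ET \<longleftrightarrow> finite VT \<and>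
     (\<forall>e\<in>ET. \<exists>u v. u \<noteq> v \<and> u \<in> VT \<and> v \<in> VT \<and> e = {u, v})"

definition sadj :: "'a set set \<Rightarrow> 'a \<Rightarrow> 'a \<Rightarrow> bool" where
  "sadj ET x y \<longleftrightarrow> {x, y} \<in> ET"

definition is_tree :: "'a set \<Rightarrow> 'a set set \<Rightarrow> bool" where
  "is_tree VT ET \<longleftrightarrow> simple_graph VT ET \<and> VT \<noteq> {} \<and>
     (\<forall>u\<in>VT. \<forall>v\<in>VT. (sadj ET)\<^sup>*\<^sup>* u v) \<and>
     \<not> (\<exists>cs. length cs \<ge> 3 \<and> distinct cs \<and>
          (\<forall>i<length cs. {cs ! i, cs ! ((i + 1) mod length cs)} \<in> ET))"

definition sdeg :: "'a set set \<Rightarrow> 'a \<Rightarrow> nat" where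
  "sdeg ET u = card {e \<in> ET. u \<in> e}"

definition max_degree :: "'a set \<Rightarrow> 'a set set \<Rightarrow> nat" where
  "max_degree VT ET = Max (sdeg ET ` VT)"

text \<open>T^(k): attach k - deg(u) semi-edges to each vertex u. Tree edges are the links
Inl e, the semi-edges at u are Inr (u, i) for i < k - deg u.\<close>

definition Tk :: "'a set \<Rightarrow> 'a set set \<Rightarrow> nat \<Rightarrow> ('a, 'a set + ('a \<times> nat)) graph" where
  "Tk VT ET k = \<lparr> gV = VT, gE = Inl ` ET, gL = {},
      gS = {Inr (u, i) | u i. u \<in> VT \<and> i < k - sdeg ET u},
      gi = (\<lambda>l. case l of Inl e \<Rightarrow> e | Inr (u, i) \<Rightarrow> {u}) \<rparr>"

end

theory Submission
  imports Defs
begin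

text \<open>An edge of G over a semi-edge of T^(k) has both ends in one fibre, and any other edge
lies over the tree edge joining the images of its ends. So the 4-cycle projects to a closed
walk of length 4 in T which at each step either stays put (exactly at the semi-edges) or
crosses a tree edge. Two consecutive edges of G over tree edges cannot lie over the same tree
edge, because at their common vertex the lift of a tree edge is unique; so the walk never
immediately backtracks. If two consecutive steps both cross edges, the remaining two steps
would close a triangle or a square in T. Hence no two consecutive steps cross edges, i.e.
the walk stays put at two opposite steps.\<close>

lemma simple_graph_edge_ends_neq:
  assumes "simple_graph VT ET" "{x, y} \<in> ET"
  shows "x \<noteq> y"
  using assms unfolding simple_graph_def by (metis doubleton_eq_iff insert_absorb2)

lemma tree_no_cycle:
  assumes "is_tree VT ET" "distinct cs" "length cs \<ge> 3"
    "\<forall>i<length cs. {cs ! i, cs ! ((i + 1) mod length cs)} \<in> ET"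
  shows False
  using assms unfolding is_tree_def by blast

lemma tree_no_triangle:
  assumes "is_tree VT ET" "distinct [x, y, z]" "{x, y} \<in> ET" "{y, z} \<in> ET" "{z, x} \<in> ET"
  shows False
  by (rule tree_no_cycle[OF assms(1,2)]) (use assms(3-5) in \<open>simp_all add: All_less_Suc\<close>)

lemma tree_no_square:
  assumes "is_tree VT ET" "distinct [x, y, z, w]"
    "{x, y} \<in> ET" "{y, z} \<in> ET" "{z, w} \<in> ET" "{w, x} \<in> ET"
  shows False
  by (rule tree_no_cycle[OF assms(1,2)]) (use assms(3-6) in \<open>simp_all add: All_less_Suc\<close>)

lemma tree_no_closed_walk4_through_path:
  assumes tree: "is_tree VT ET"
    and edges: "{a0, a1} \<in> ET" "{a1, a2} \<in> ET"
    and steps: "a2 = a3 \<or> {a2, a3} \<in> ET" "a3 = a0 \<or> {a3, a0} \<in> ET"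
    and "a0 \<noteq> a2"
    and no_backtrack: "a2 \<noteq> a3 \<Longrightarrow> a3 \<noteq> a0 \<Longrightarrow> a1 \<noteq> a3"
  shows False
proof -
  have sg: "simple_graph VT ET" using tree by (simp add: is_tree_def)
  have "a0 \<noteq> a1" "a1 \<noteq> a2"
    using edges by (auto dest: simple_graph_edge_ends_neq[OF sg])
  consider "a2 = a3" | "a3 = a0" | "a2 \<noteq> a3" "a3 \<noteq> a0" by blast
  then show False
  proof cases
    case 1
    then show False
      using tree_no_triangle[OF tree, of a0 a1 a2] edges steps \<open>a0 \<noteq> a1\<close> \<open>a1 \<noteq> a2\<close> \<open>a0 \<noteq> a2\<close>
      by auto
  next
    case 2
    then show False
      using tree_no_triangle[OF tree, of a0 a1 a2] edges steps \<open>a0 \<noteq> a1\<close> \<open>a1 \<noteq> a2\<close> \<open>a0 \<noteq> a2\<close>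
      by (auto simp: insert_commute)
  next
    case 3
    then show False
      using tree_no_square[OF tree, of a0 a1 a2 a3] edges steps no_backtrack
        \<open>a0 \<noteq> a1\<close> \<open>a1 \<noteq> a2\<close> \<open>a0 \<noteq> a2\<close>
      by auto
  qed
qed

lemma tree_closed_walk4_opposite_stays:
  assumes tree: "is_tree VT ET"
    and steps: "a0 = a1 \<or> {a0, a1} \<in> ET" "a1 = a2 \<or> {a1, a2} \<in> ET"
      "a2 = a3 \<or> {a2, a3} \<in> ET" "a3 = a0 \<or> {a3, a0} \<in> ET"
    and no_backtrack: "a0 \<noteq> a1 \<Longrightarrow> a1 \<noteq> a2 \<Longrightarrow> a0 \<noteq> a2"
      "a1 \<noteq> a2 \<Longrightarrow> a2 \<noteq> a3 \<Longrightarrow> a1 \<noteq> a3"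
      "a2 \<noteq> a3 \<Longrightarrow> a3 \<noteq> a0 \<Longrightarrow> a2 \<noteq> a0"
      "a3 \<noteq> a0 \<Longrightarrow> a0 \<noteq> a1 \<Longrightarrow> a3 \<noteq> a1"
  shows "a0 = a1 \<and> a2 = a3 \<or> a1 = a2 \<and> a3 = a0"
proof (rule ccontr)
  assume "\<not> ?thesis"
  then consider "a0 \<noteq> a1" "a1 \<noteq> a2" | "a1 \<noteq> a2" "a2 \<noteq> a3"
    | "a2 \<noteq> a3" "a3 \<noteq> a0" | "a3 \<noteq> a0" "a0 \<noteq> a1"
    by blast
  then show False
  proof cases
    case 1
    then show False
      using tree_no_closed_walk4_through_path[OF tree, of a0 a1 a2 a3] steps no_backtrack by blast
  next
    case 2
    then show False
      using tree_no_closed_walk4_through_path[OF tree, of a1 a2 a3 a0] steps no_backtrack by blast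
  next
    case 3
    then show False
      using tree_no_closed_walk4_through_path[OF tree, of a2 a3 a0 a1] steps no_backtrack by blast
  next
    case 4
    then show False
      using tree_no_closed_walk4_through_path[OF tree, of a3 a0 a1 a2] steps no_backtrack by blast
  qed
qed

lemma covering_link_image:
  "covering G H fv fl \<Longrightarrow> l \<in> links G \<Longrightarrow> fl l \<in> links H"
  unfolding covering_def by (elim conjE) (erule bspec)

lemma covering_edgeD:
  assumes "covering G H fv fl" "e \<in> gE H" "u \<noteq> v" "gi H e = {u, v}"
  shows "\<forall>l\<in>lfiber G fl e. l \<in> gE G \<and>
           (\<exists>a b. gi G l = {a, b} \<and> a \<in> fiber G fv u \<and> b \<in> fiber G fv v)"
    and "\<forall>x\<in>fiber G fv u \<union> fiber G fv v. \<exists>!l. l \<in> lfiber G fl e \<and> x \<in> gi G l"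
proof -
  from assms(1) have "\<forall>e\<in>gE H. \<forall>u v. u \<noteq> v \<and> gi H e = {u, v} \<longrightarrow>
      (\<forall>l\<in>lfiber G fl e. l \<in> gE G \<and>
         (\<exists>a b. gi G l = {a, b} \<and> a \<in> fiber G fv u \<and> b \<in> fiber G fv v)) \<and>
      (\<forall>x\<in>fiber G fv u \<union> fiber G fv v. \<exists>!l. l \<in> lfiber G fl e \<and> x \<in> gi G l)"
    unfolding covering_def by (elim conjE)
  with assms(2-4) have "(\<forall>l\<in>lfiber G fl e. l \<in> gE G \<and>
         (\<exists>a b. gi G l = {a, b} \<and> a \<in> fiber G fv u \<and> b \<in> fiber G fv v)) \<and>
      (\<forall>x\<in>fiber G fv u \<union> fiber G fv v. \<exists>!l. l \<in> lfiber G fl e \<and> x \<in> gi G l)"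
    by blast
  then show "\<forall>l\<in>lfiber G fl e. l \<in> gE G \<and>
           (\<exists>a b. gi G l = {a, b} \<and> a \<in> fiber G fv u \<and> b \<in> fiber G fv v)"
    and "\<forall>x\<in>fiber G fv u \<union> fiber G fv v. \<exists>!l. l \<in> lfiber G fl e \<and> x \<in> gi G l"
    by simp_all
qed

lemma covering_semi_edgeD:
  assumes "covering G H fv fl" "s \<in> gS H" "gi H s = {u}" "l \<in> lfiber G fl s"
  shows "gi G l \<subseteq> fiber G fv u"
proof -
  from assms(1) have "\<forall>s\<in>gS H. \<forall>u. gi H s = {u} \<longrightarrow>
      (\<forall>l\<in>lfiber G fl s. (l \<in> gE G \<or> l \<in> gS G) \<and> gi G l \<subseteq> fiber G fv u) \<and>
      (\<forall>x\<in>fiber G fv u. \<exists>!l. l \<in> lfiber G fl s \<and> x \<in> gi G l)"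
    unfolding covering_def by (elim conjE)
  with assms(2-4) show ?thesis by blast
qed

lemma covering_edge_lift_unique:
  assumes cov: "covering G H fv fl" and e: "e \<in> gE H" "u \<noteq> v" "gi H e = {u, v}"
    and l: "l \<in> lfiber G fl e" "l' \<in> lfiber G fl e"
    and x: "x \<in> gi G l" "x \<in> gi G l'"
  shows "l = l'"
proof -
  have "x \<in> fiber G fv u \<union> fiber G fv v"
    using covering_edgeD(1)[OF cov e] l(1) x(1) by force
  then show "l = l'" using covering_edgeD(2)[OF cov e] l x by blast
qed

lemma covering_Tk_edge_image:
  assumes cov: "covering G (Tk VT ET k) fv fl" and sg: "simple_graph VT ET"
    and l: "l \<in> gE G" "gi G l = {x, y}"
  shows "fl l \<in> gS (Tk VT ET k) \<and> fv x = fv y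
    \<or> fl l = Inl {fv x, fv y} \<and> {fv x, fv y} \<in> ET"
proof -
  have "l \<in> links G" using l by (simp add: links_def)
  then have image: "fl l \<in> links (Tk VT ET k)" and fibre: "l \<in> lfiber G fl (fl l)"
    using covering_link_image[OF cov] by (auto simp: lfiber_def)
  show ?thesis
  proof (cases "fl l \<in> gS (Tk VT ET k)")
    case True
    then obtain u i where "fl l = Inr (u, i)" by (auto simp: Tk_def)
    then have "gi (Tk VT ET k) (fl l) = {u}" by (simp add: Tk_def)
    then have "gi G l \<subseteq> fiber G fv u"
      using covering_semi_edgeD[OF cov True _ fibre] by blast
    then show ?thesis using True l(2) by (simp add: fiber_def)
  next
    case False
    then obtain e where e: "fl l = Inl e" "e \<in> ET" using image by (auto simp: Tk_def links_def)
    then obtain u v where uv: "u \<noteq> v" "e = {u, v}" using sg unfolding simple_graph_def by blast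
    have "fl l \<in> gE (Tk VT ET k)" "gi (Tk VT ET k) (fl l) = {u, v}"
      using e uv by (auto simp: Tk_def)
    then obtain a b where "gi G l = {a, b}" "a \<in> fiber G fv u" "b \<in> fiber G fv v"
      using covering_edgeD(1)[OF cov _ uv(1)] fibre by blast
    then have "{fv x, fv y} = e" using l(2) uv(2) by (auto simp: fiber_def doubleton_eq_iff)
    then show ?thesis using e by simp
  qed
qed

lemma covering_Tk_semi_edge_iff:
  assumes "covering G (Tk VT ET k) fv fl" "simple_graph VT ET" "l \<in> gE G" "gi G l = {x, y}"
  shows "fl l \<in> gS (Tk VT ET k) \<longleftrightarrow> fv x = fv y"
proof -
  have "Inl e \<notin> gS (Tk VT ET k)" for e by (simp add: Tk_def)
  then show ?thesis
    using covering_Tk_edge_image[OF assms] simple_graph_edge_ends_neq[OF assms(2)] by metis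
qed

lemma covering_Tk_step:
  assumes "covering G (Tk VT ET k) fv fl" "simple_graph VT ET" "l \<in> gE G" "gi G l = {x, y}"
  shows "fv x = fv y \<or> {fv x, fv y} \<in> ET"
  using covering_Tk_edge_image[OF assms] by blast

lemma covering_Tk_no_backtrack:
  assumes cov: "covering G (Tk VT ET k) fv fl" and sg: "simple_graph VT ET"
    and l: "l \<in> gE G" "gi G l = {x, y}" and l': "l' \<in> gE G" "gi G l' = {y, z}"
    and "x \<noteq> z" and xy: "fv x \<noteq> fv y" and yz: "fv y \<noteq> fv z"
  shows "fv x \<noteq> fv z"
proof
  assume xz: "fv x = fv z"
  define e where "e = {fv x, fv y}"
  have "fl l = Inl e" "e \<in> ET"
    using covering_Tk_edge_image[OF cov sg l] covering_Tk_semi_edge_iff[OF cov sg l] xy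
    unfolding e_def by blast+
  moreover have "fl l' = Inl e"
    using covering_Tk_edge_image[OF cov sg l'] covering_Tk_semi_edge_iff[OF cov sg l'] yz xz
    unfolding e_def by (metis insert_commute)
  ultimately have "l \<in> lfiber G fl (Inl e)" "l' \<in> lfiber G fl (Inl e)"
    and "Inl e \<in> gE (Tk VT ET k)" "gi (Tk VT ET k) (Inl e) = {fv x, fv y}"
    using l l' by (auto simp: lfiber_def links_def Tk_def e_def)
  then have "l = l'"
    using covering_edge_lift_unique[OF cov _ xy] l(2) l'(2) by blast
  then show False using l(2) l'(2) \<open>x \<noteq> z\<close> by (auto simp: doubleton_eq_iff)
qed

theorem mainTheorem3:
  fixes VT :: "'a set" and ET :: "'a set set" and k \<Delta> :: nat
    and G :: "('v, 'l) graph"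
    and fv :: "'v \<Rightarrow> 'a" and fl :: "'l \<Rightarrow> 'a set + ('a \<times> nat)"
    and v0 v1 v2 v3 :: 'v and e0 e1 e2 e3 :: 'l
  assumes "is_tree VT ET"
    and "\<Delta> = max_degree VT ET"
    and "k \<ge> \<Delta>"
    and "wf_graph G"
    and "covering G (Tk VT ET k) fv fl"
    and "distinct [v0, v1, v2, v3]"
    and "{e0, e1, e2, e3} \<subseteq> gE G"
    and "gi G e0 = {v0, v1}" and "gi G e1 = {v1, v2}"
    and "gi G e2 = {v2, v3}" and "gi G e3 = {v3, v0}"
  shows "(fl e0 \<in> gS (Tk VT ET k) \<and> fl e2 \<in> gS (Tk VT ET k)) \<or>
         (fl e1 \<in> gS (Tk VT ET k) \<and> fl e3 \<in> gS (Tk VT ET k))"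
proof -
  note tree = assms(1) and cov = assms(5)
  have sg: "simple_graph VT ET" using tree by (simp add: is_tree_def)
  have e: "e0 \<in> gE G" "e1 \<in> gE G" "e2 \<in> gE G" "e3 \<in> gE G" using assms(7) by auto
  note ends = assms(8-11)
  note step = covering_Tk_step[OF cov sg] and semi = covering_Tk_semi_edge_iff[OF cov sg]
  note no_backtrack = covering_Tk_no_backtrack[OF cov sg]
  have "fv v0 = fv v1 \<and> fv v2 = fv v3 \<or> fv v1 = fv v2 \<and> fv v3 = fv v0"
  proof (rule tree_closed_walk4_opposite_stays[OF tree])
    show "fv v0 = fv v1 \<or> {fv v0, fv v1} \<in> ET" "fv v1 = fv v2 \<or> {fv v1, fv v2} \<in> ET"
      "fv v2 = fv v3 \<or> {fv v2, fv v3} \<in> ET" "fv v3 = fv v0 \<or> {fv v3, fv v0} \<in> ET"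
      using step e ends by blast+
    have "v0 \<noteq> v2" "v1 \<noteq> v3" using assms(6) by auto
    then show "fv v0 \<noteq> fv v1 \<Longrightarrow> fv v1 \<noteq> fv v2 \<Longrightarrow> fv v0 \<noteq> fv v2"
      "fv v1 \<noteq> fv v2 \<Longrightarrow> fv v2 \<noteq> fv v3 \<Longrightarrow> fv v1 \<noteq> fv v3"
      "fv v2 \<noteq> fv v3 \<Longrightarrow> fv v3 \<noteq> fv v0 \<Longrightarrow> fv v2 \<noteq> fv v0"
      "fv v3 \<noteq> fv v0 \<Longrightarrow> fv v0 \<noteq> fv v1 \<Longrightarrow> fv v3 \<noteq> fv v1"
      using no_backtrack e ends by (metis not_sym)+
  qed
  then show ?thesis using semi e ends by metis
qed

end
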